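(* Let $A \in \mathbb{C}^{N\times N}$ have an orthonormal basis of eigenvectors $\psi_1,\ldots,\psi_N$ with eigenvalues ordered so that $|\lambda_1|\ge\cdots\ge|\lambda_N|$ and $\lambda_m \neq 0$ for some $1\le m<N$. Let $\Psi_{\le m} = [\psi_1,\ldots,\psi_m]$ and $\Psi_{>m} = [\psi_{m+1},\ldots,\psi_N]$. Let $V \in \mathbb{C}^{N\times m}$ be such that $\Psi_{\le m}^{*}V$ is invertible, let $\Phi\in\mathbb{C}^{m\times m}$ be invertible, let $E \in \mathbb{C}^{N\times m}$, and set $V' = AV\Phi + E$. If $$\frac{\|E\|_2}{|\lambda_m|} < \left(\frac{1}{\kappa_2(\Psi_{\le m}^{*}V\Phi)} - \left|\frac{\lambda_{m+1}}{\lambda_m}\right|\right)\frac{\|\Psi_{\le m}^{*}V\Phi\|_2\,\|\Psi_{>m}^{*}V\Phi\|_2}{\|V\Phi\|_2},$$ then $\Theta(\mathcal{R}(V'),\mathcal{R}(\Psi_{\le m})) < \Theta(\mathcal{R}(V),\mathcal{R}(\Psi_{\le m}))$.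
   Context: $\|\cdot\|_2$ is the spectral norm, $\kappa_2(X) = \sigma_1(X)/\sigma_m(X)$ is the 2-norm condition number of $X\in\mathbb{C}^{m\times m}$, $\mathcal{R}(X)$ is the column space of $X$, and $^{*}$ denotes conjugate transpose. For $X\in\mathbb{C}^{N\times m}$ with $\Psi_{\le m}^{*}X$ invertible, $\Theta(\mathcal{R}(X),\mathcal{R}(\Psi_{\le m}))$ denotes the largest principal angle between $\mathcal{R}(X)$ and $\mathcal{R}(\Psi_{\le m})$, which satisfies $\tan\Theta(\mathcal{R}(X),\mathcal{R}(\Psi_{\le m})) = \sigma_1\big(\Psi_{>m}^{*}X(\Psi_{\le m}^{*}X)^{-1}\big)$, $\sigma_1$ denoting the largest singular value. In the application, $V'$ is the result of one step of inexact subspace iteration: $\Phi$ contains Ritz coefficients and $E$ is the accumulated perturbation (truncation) error. *)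

theory Defs
  imports "Jordan_Normal_Form.Schur_Decomposition"
begin

definition vnorm :: "complex vec \<Rightarrow> real" where
  "vnorm v = sqrt (\<Sum>i<dim_vec v. (cmod (v $ i))^2)"

definition spec_norm :: "complex mat \<Rightarrow> real" where
  "spec_norm X = Sup {vnorm (X *\<^sub>v x) | x. x \<in> carrier_vec (dim_col X) \<and> vnorm x = 1}"

text \<open>Smallest singular value sigma_m of a matrix with m columns (m \<le> rows).\<close>
definition smin :: "complex mat \<Rightarrow> real" where
  "smin X = Inf {vnorm (X *\<^sub>v x) | x. x \<in> carrier_vec (dim_col X) \<and> vnorm x = 1}"

definition cond2 :: "complex mat \<Rightarrow> real" where
  "cond2 X = spec_norm X / smin X"

definition minv :: "complex mat \<Rightarrow> complex mat" where
  "minv Y = (SOME B. B \<in> carrier_mat (dim_row Y) (dim_row Y) \<and>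
                      Y * B = 1\<^sub>m (dim_row Y) \<and> B * Y = 1\<^sub>m (dim_row Y))"

definition Psi_le :: "complex mat \<Rightarrow> nat \<Rightarrow> complex mat" where
  "Psi_le Psi m = mat (dim_row Psi) m (\<lambda>(i, j). Psi $$ (i, j))"

definition Psi_gt :: "complex mat \<Rightarrow> nat \<Rightarrow> complex mat" where
  "Psi_gt Psi m = mat (dim_row Psi) (dim_col Psi - m) (\<lambda>(i, j). Psi $$ (i, j + m))"

text \<open>tan of the largest principal angle between R(X) and R(Psi_{\<le>m}).\<close>
definition tan_theta :: "complex mat \<Rightarrow> nat \<Rightarrow> complex mat \<Rightarrow> real" where
  "tan_theta Psi m X =
     spec_norm (mat_adjoint (Psi_gt Psi m) * X * minv (mat_adjoint (Psi_le Psi m) * X))"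

definition theta :: "complex mat \<Rightarrow> nat \<Rightarrow> complex mat \<Rightarrow> real" where
  "theta Psi m X =
     (if invertible_mat (mat_adjoint (Psi_le Psi m) * X) then arctan (tan_theta Psi m X)
      else pi / 2)"

end

theory Submission
  imports Defs "HOL-Analysis.L2_Norm"
begin

text \<open>
  Let \<tau> = tan Theta(R(V), R(Psi_le)) and write X = Psi_le^* V Phi, Y = Psi_gt^* V Phi for the
  coordinates of V Phi in the eigenbasis. By definition of \<tau>, |Y z| \<le> \<tau> |X z| for all z, while
  |X z|^2 + |Y z|^2 = |V Phi z|^2; hence ||Y|| \<le> \<tau> ||X|| and sqrt (1 + \<tau>^2) ||Y|| \<le> \<tau> ||V Phi||.
  Applying A multiplies the first block of coordinates by eigenvalues of modulus at least
  |lam_m| and the second block by eigenvalues of modulus at most |lam_(m+1)|, and by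
  Cauchy-Schwarz the error E changes \<tau> |X z| - |Y z| by at most sqrt (1 + \<tau>^2) ||E|| |z|.
  So the coordinates X', Y' of V' satisfy \<tau> |X' z| - |Y' z| \<ge> \<delta> |z| with
  \<delta> = \<tau> |lam_m| sigma_min(X) - |lam_(m+1)| ||Y|| - sqrt (1 + \<tau>^2) ||E||, and the hypothesis,
  together with the two bounds on ||Y||, makes \<delta> positive.
  Then X' is injective, hence invertible, and ||Y' X'^-1|| \<le> \<tau> - \<delta> / ||X'|| < \<tau>.
\<close>

section \<open>Euclidean norm\<close>

lemma vnorm_eq_L2_set: "vnorm v = L2_set (\<lambda>i. cmod (v $ i)) {..<dim_vec v}"
  unfolding vnorm_def L2_set_def by simp

lemma vnorm_nonneg [simp]: "0 \<le> vnorm v"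
  unfolding vnorm_def by (simp add: sum_nonneg)

lemma vnorm_power2: "(vnorm v)\<^sup>2 = (\<Sum>i<dim_vec v. (cmod (v $ i))\<^sup>2)"
  unfolding vnorm_def by (simp add: sum_nonneg)

lemma vnorm_add_le:
  assumes "u \<in> carrier_vec n" "v \<in> carrier_vec n"
  shows "vnorm (u + v) \<le> vnorm u + vnorm v"
proof -
  have "vnorm (u + v) = L2_set (\<lambda>i. cmod (u $ i + v $ i)) {..<n}"
    using assms by (auto simp: vnorm_eq_L2_set intro!: L2_set_cong)
  also have "\<dots> \<le> L2_set (\<lambda>i. cmod (u $ i) + cmod (v $ i)) {..<n}"
    by (rule L2_set_mono) (auto intro: norm_triangle_ineq)
  also have "\<dots> \<le> L2_set (\<lambda>i. cmod (u $ i)) {..<n} + L2_set (\<lambda>i. cmod (v $ i)) {..<n}"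
    by (rule L2_set_triangle_ineq)
  also have "\<dots> = vnorm u + vnorm v"
    using assms by (simp add: vnorm_eq_L2_set)
  finally show ?thesis .
qed

lemma vnorm_uminus [simp]: "vnorm (- v) = vnorm v"
  by (auto simp: vnorm_eq_L2_set intro!: L2_set_cong)

lemma vnorm_add_ge:
  assumes "u \<in> carrier_vec n" "v \<in> carrier_vec n"
  shows "vnorm u - vnorm v \<le> vnorm (u + v)"
proof -
  have "u = (u + v) + (- v)"
    using assms by auto
  then have "vnorm u \<le> vnorm (u + v) + vnorm (- v)"
    by (metis assms add_carrier_vec uminus_carrier_vec vnorm_add_le)
  then show ?thesis by simp
qed

lemma vnorm_smult: "vnorm (a \<cdot>\<^sub>v v) = cmod a * vnorm v"
proof -
  have "vnorm (a \<cdot>\<^sub>v v) = L2_set (\<lambda>i. cmod a * cmod (v $ i)) {..<dim_vec v}"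
    by (auto simp: vnorm_eq_L2_set norm_mult intro!: L2_set_cong)
  also have "\<dots> = cmod a * vnorm v"
    by (simp add: vnorm_eq_L2_set L2_set_right_distrib)
  finally show ?thesis .
qed

lemma vnorm_eq_0_iff:
  assumes "v \<in> carrier_vec n"
  shows "vnorm v = 0 \<longleftrightarrow> v = 0\<^sub>v n"
proof -
  have "vnorm v = 0 \<longleftrightarrow> (\<forall>i\<in>{..<n}. cmod (v $ i) = 0)"
    using assms by (simp add: vnorm_eq_L2_set L2_set_eq_0_iff)
  also have "\<dots> \<longleftrightarrow> v = 0\<^sub>v n"
    using assms by (auto intro!: eq_vecI)
  finally show ?thesis .
qed

lemma vnorm_unit_vec:
  assumes "i < n"
  shows "vnorm (unit_vec n i) = 1"
proof -
  have "(\<Sum>j<n. (cmod (unit_vec n i $ j))\<^sup>2) = (\<Sum>j<n. if j = i then 1 else 0)"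
    by (intro sum.cong) (auto simp: unit_vec_def)
  then show ?thesis
    using assms unfolding vnorm_def by simp
qed

lemma cmod_index_le_vnorm: "j < dim_vec x \<Longrightarrow> cmod (x $ j) \<le> vnorm x"
  unfolding vnorm_eq_L2_set by (rule member_le_L2_set) auto

lemma vnorm_mult_mat_vec_le_entry_sum:
  assumes M: "M \<in> carrier_mat r c" and x: "x \<in> carrier_vec c"
  shows "vnorm (M *\<^sub>v x) \<le> (\<Sum>i<r. \<Sum>j<c. cmod (M $$ (i, j))) * vnorm x"
proof -
  have "vnorm (M *\<^sub>v x) \<le> (\<Sum>i<r. cmod ((M *\<^sub>v x) $ i))"
    using M unfolding vnorm_eq_L2_set by (simp del: index_mult_mat_vec add: L2_set_le_sum)
  also have "\<dots> \<le> (\<Sum>i<r. (\<Sum>j<c. cmod (M $$ (i, j))) * vnorm x)"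
  proof (rule sum_mono)
    fix i assume "i \<in> {..<r}"
    then have "(M *\<^sub>v x) $ i = (\<Sum>j<c. M $$ (i, j) * x $ j)"
      using M x by (auto simp: scalar_prod_def lessThan_atLeast0)
    then have "cmod ((M *\<^sub>v x) $ i) \<le> (\<Sum>j<c. cmod (M $$ (i, j) * x $ j))"
      by (simp add: norm_sum)
    also have "\<dots> \<le> (\<Sum>j<c. cmod (M $$ (i, j)) * vnorm x)"
      using x by (auto intro!: sum_mono mult_left_mono cmod_index_le_vnorm simp: norm_mult)
    finally show "cmod ((M *\<^sub>v x) $ i) \<le> (\<Sum>j<c. cmod (M $$ (i, j))) * vnorm x"
      by (simp add: sum_distrib_right)
  qed
  also have "\<dots> = (\<Sum>i<r. \<Sum>j<c. cmod (M $$ (i, j))) * vnorm x"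
    by (simp add: sum_distrib_right)
  finally show ?thesis .
qed

lemma cauchy_schwarz_two:
  fixes a x y :: real
  shows "a * x + y \<le> sqrt (1 + a\<^sup>2) * sqrt (x\<^sup>2 + y\<^sup>2)"
proof -
  have "(1 + a\<^sup>2) * (x\<^sup>2 + y\<^sup>2) - (a * x + y)\<^sup>2 = (x - a * y)\<^sup>2"
    by (simp add: power2_eq_square algebra_simps)
  then have "(a * x + y)\<^sup>2 \<le> (1 + a\<^sup>2) * (x\<^sup>2 + y\<^sup>2)"
    by (metis diff_ge_0_iff_ge zero_le_power2)
  then show ?thesis
    by (metis real_le_rsqrt real_sqrt_mult)
qed

section \<open>Spectral norm and smallest singular value\<close>

definition unit_image_norms :: "complex mat \<Rightarrow> real set" where
  "unit_image_norms X = {vnorm (X *\<^sub>v x) | x. x \<in> carrier_vec (dim_col X) \<and> vnorm x = 1}"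

lemma spec_norm_eq_Sup: "spec_norm X = Sup (unit_image_norms X)"
  unfolding spec_norm_def unit_image_norms_def ..

lemma smin_eq_Inf: "smin X = Inf (unit_image_norms X)"
  unfolding smin_def unit_image_norms_def ..

lemma bdd_above_unit_image_norms: "bdd_above (unit_image_norms M)"
proof (rule bdd_aboveI)
  fix a assume "a \<in> unit_image_norms M"
  then obtain x where "x \<in> carrier_vec (dim_col M)" "vnorm x = 1" "a = vnorm (M *\<^sub>v x)"
    unfolding unit_image_norms_def by auto
  then show "a \<le> (\<Sum>i<dim_row M. \<Sum>j<dim_col M. cmod (M $$ (i, j)))"
    using vnorm_mult_mat_vec_le_entry_sum[of M "dim_row M" "dim_col M" x] by auto
qed

lemma bdd_below_unit_image_norms: "bdd_below (unit_image_norms M)"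
  by (rule bdd_belowI[of _ 0]) (auto simp: unit_image_norms_def)

lemma unit_image_norms_nonempty: "0 < dim_col M \<Longrightarrow> unit_image_norms M \<noteq> {}"
  unfolding unit_image_norms_def using vnorm_unit_vec[of 0 "dim_col M"]
  by (auto intro!: exI[of _ "unit_vec (dim_col M) 0"])

lemma vnorm_ratio_mem_unit_image_norms:
  assumes M: "M \<in> carrier_mat r c" and x: "x \<in> carrier_vec c" and "vnorm x \<noteq> 0"
  shows "vnorm (M *\<^sub>v x) / vnorm x \<in> unit_image_norms M"
proof -
  let ?y = "(1 / complex_of_real (vnorm x)) \<cdot>\<^sub>v x"
  have "M *\<^sub>v ?y = (1 / complex_of_real (vnorm x)) \<cdot>\<^sub>v (M *\<^sub>v x)"
    using M x by (simp add: mult_mat_vec)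
  then have "vnorm (M *\<^sub>v ?y) = vnorm (M *\<^sub>v x) / vnorm x"
    by (simp add: vnorm_smult norm_divide)
  moreover have "?y \<in> carrier_vec (dim_col M)" "vnorm ?y = 1"
    using M x \<open>vnorm x \<noteq> 0\<close> by (auto simp: vnorm_smult norm_divide)
  ultimately show ?thesis
    unfolding unit_image_norms_def by (metis (mono_tags, lifting) mem_Collect_eq)
qed

lemma vnorm_mult_mat_vec_le_spec_norm:
  assumes M: "M \<in> carrier_mat r c" and x: "x \<in> carrier_vec c"
  shows "vnorm (M *\<^sub>v x) \<le> spec_norm M * vnorm x"
proof (cases "vnorm x = 0")
  case True
  then have "M *\<^sub>v x = 0\<^sub>v r"
    using vnorm_eq_0_iff[OF x] M by auto
  then show ?thesis
    using True vnorm_eq_0_iff[of "M *\<^sub>v x" r] by simp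
next
  case False
  then have "vnorm (M *\<^sub>v x) / vnorm x \<le> spec_norm M"
    unfolding spec_norm_eq_Sup
    by (intro cSup_upper bdd_above_unit_image_norms vnorm_ratio_mem_unit_image_norms[OF M x])
  then show ?thesis
    using False by (simp add: divide_le_eq less_le)
qed

lemma smin_le_vnorm_mult_mat_vec:
  assumes M: "M \<in> carrier_mat r c" and x: "x \<in> carrier_vec c"
  shows "smin M * vnorm x \<le> vnorm (M *\<^sub>v x)"
proof (cases "vnorm x = 0")
  case False
  then have "smin M \<le> vnorm (M *\<^sub>v x) / vnorm x"
    unfolding smin_eq_Inf
    by (intro cInf_lower bdd_below_unit_image_norms vnorm_ratio_mem_unit_image_norms[OF M x])
  then show ?thesis
    using False by (simp add: le_divide_eq less_le)
qed simp

lemma spec_norm_le: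
  assumes "0 < dim_col M"
    and "\<And>x. x \<in> carrier_vec (dim_col M) \<Longrightarrow> vnorm x = 1 \<Longrightarrow> vnorm (M *\<^sub>v x) \<le> b"
  shows "spec_norm M \<le> b"
  unfolding spec_norm_eq_Sup using assms
  by (intro cSup_least unit_image_norms_nonempty) (auto simp: unit_image_norms_def)

lemma spec_norm_nonneg:
  assumes "0 < dim_col M"
  shows "0 \<le> spec_norm M"
proof -
  obtain a where "a \<in> unit_image_norms M"
    using unit_image_norms_nonempty[OF assms] by auto
  moreover have "0 \<le> a"
    using \<open>a \<in> unit_image_norms M\<close> unfolding unit_image_norms_def by auto
  ultimately show ?thesis
    unfolding spec_norm_eq_Sup by (meson cSup_upper bdd_above_unit_image_norms order_trans)
qed

section \<open>Adjoints, isometries and inverses\<close>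

lemma mat_adjoint_carrier: "A \<in> carrier_mat r c \<Longrightarrow> mat_adjoint A \<in> carrier_mat c r"
  unfolding mat_adjoint_def by auto

lemma dim_mat_adjoint [simp]:
  "dim_row (mat_adjoint A) = dim_col A" "dim_col (mat_adjoint A) = dim_row A"
  unfolding mat_adjoint_def by auto

lemma index_mat_adjoint [simp]:
  "i < dim_col A \<Longrightarrow> j < dim_row A \<Longrightarrow> mat_adjoint A $$ (i, j) = cnj (A $$ (j, i))"
  unfolding mat_adjoint_def by (simp add: mat_of_rows_index)

lemma mat_adjoint_mat_adjoint [simp]: "mat_adjoint (mat_adjoint A) = (A :: complex mat)"
  by (rule eq_matI) auto

lemma index_mat_adjoint_mult_vec:
  assumes "X \<in> carrier_mat r c" "v \<in> carrier_vec r" "i < c"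
  shows "(mat_adjoint X *\<^sub>v v) $ i = (\<Sum>j<r. cnj (X $$ (j, i)) * v $ j)"
  using assms by (auto simp: scalar_prod_def lessThan_atLeast0 intro!: sum.cong)

lemma vnorm_power2_complex:
  "complex_of_real ((vnorm v)\<^sup>2) = (\<Sum>i<dim_vec v. v $ i * cnj (v $ i))"
  unfolding vnorm_power2 of_real_sum by (intro sum.cong refl) (rule complex_norm_square)

lemma vnorm_isometry:
  assumes U: "U \<in> carrier_mat n k" and UU: "mat_adjoint U * U = 1\<^sub>m k" and v: "v \<in> carrier_vec k"
  shows "vnorm (U *\<^sub>v v) = vnorm v"
proof -
  have Uv: "(U *\<^sub>v v) $ i = (\<Sum>j<k. U $$ (i, j) * v $ j)" if "i < n" for i
    using U v that by (auto simp: scalar_prod_def lessThan_atLeast0)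
  have orth: "(\<Sum>i<n. cnj (U $$ (i, l)) * U $$ (i, j)) = (if l = j then 1 else 0)"
    if "l < k" "j < k" for l j
  proof -
    have "(mat_adjoint U * U) $$ (l, j) = (\<Sum>i<n. cnj (U $$ (i, l)) * U $$ (i, j))"
      using U that by (auto simp: scalar_prod_def lessThan_atLeast0 intro!: sum.cong)
    then show ?thesis
      using UU that by simp
  qed
  have "complex_of_real ((vnorm (U *\<^sub>v v))\<^sup>2)
      = (\<Sum>i<n. (\<Sum>j<k. U $$ (i, j) * v $ j) * cnj (\<Sum>l<k. U $$ (i, l) * v $ l))"
    unfolding vnorm_power2_complex using U
    by (auto simp del: index_mult_mat_vec simp: Uv intro!: sum.cong)
  also have "\<dots> = (\<Sum>i<n. \<Sum>l<k. \<Sum>j<k. (v $ j * cnj (v $ l)) * (cnj (U $$ (i, l)) * U $$ (i, j)))"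
    by (simp add: sum_distrib_left sum_distrib_right ac_simps)
  also have "\<dots> = (\<Sum>l<k. \<Sum>j<k. (v $ j * cnj (v $ l)) * (\<Sum>i<n. cnj (U $$ (i, l)) * U $$ (i, j)))"
    by (simp only: sum_distrib_left sum.swap[of _ "{..<n}"])
  also have "\<dots> = (\<Sum>l<k. \<Sum>j<k. if l = j then v $ j * cnj (v $ l) else 0)"
    by (intro sum.cong refl) (simp add: orth)
  also have "\<dots> = (\<Sum>j<k. v $ j * cnj (v $ j))"
    by (simp add: sum.delta)
  also have "\<dots> = complex_of_real ((vnorm v)\<^sup>2)"
    unfolding vnorm_power2_complex using v by simp
  finally have "(vnorm (U *\<^sub>v v))\<^sup>2 = (vnorm v)\<^sup>2"
    using of_real_eq_iff by blast
  then show ?thesis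
    by (simp add: power2_eq_iff_nonneg)
qed

lemma minv_inverse:
  assumes "invertible_mat M" and M: "M \<in> carrier_mat n n"
  shows "minv M \<in> carrier_mat n n" "M * minv M = 1\<^sub>m n" "minv M * M = 1\<^sub>m n"
proof -
  obtain B where MB: "inverts_mat M B" and BM: "inverts_mat B M"
    using assms(1) unfolding invertible_mat_def by blast
  have "B \<in> carrier_mat n n"
    using MB BM M unfolding inverts_mat_def
    by (metis carrier_matD carrier_mat_triv index_mult_mat(3) index_one_mat(3))
  then have "\<exists>B. B \<in> carrier_mat (dim_row M) (dim_row M) \<and>
                 M * B = 1\<^sub>m (dim_row M) \<and> B * M = 1\<^sub>m (dim_row M)"
    using MB BM M unfolding inverts_mat_def by auto
  from someI_ex[OF this] show "minv M \<in> carrier_mat n n" "M * minv M = 1\<^sub>m n" "minv M * M = 1\<^sub>m n"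
    using M unfolding minv_def by auto
qed

lemma invertible_mat_if_injective:
  fixes M :: "complex mat"
  assumes M: "M \<in> carrier_mat n n"
    and inj: "\<And>z. z \<in> carrier_vec n \<Longrightarrow> M *\<^sub>v z = 0\<^sub>v n \<Longrightarrow> z = 0\<^sub>v n"
  shows "invertible_mat M"
proof -
  have "det M \<noteq> 0"
    using det_0_iff_vec_prod_zero_field[OF M] inj by auto
  then have "M \<in> Units (ring_mat TYPE(complex) n ())"
    by (rule det_non_zero_imp_unit[OF M])
  then obtain B where "B \<in> carrier_mat n n" "M * B = 1\<^sub>m n" "B * M = 1\<^sub>m n"
    unfolding Units_def ring_mat_def by auto
  then show ?thesis
    using M unfolding invertible_mat_def inverts_mat_def square_mat.simps by auto
qed

section \<open>One block of coordinates dominating another\<close>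

lemma vnorm_mult_le_spec_norm_mult_minv:
  assumes X: "X \<in> carrier_mat m m" "invertible_mat X" and Y: "Y \<in> carrier_mat k m"
    and w: "w \<in> carrier_vec m"
  shows "vnorm (Y *\<^sub>v w) \<le> spec_norm (Y * minv X) * vnorm (X *\<^sub>v w)"
proof -
  note Xinv = minv_inverse[OF X(2,1)]
  have "(Y * minv X) *\<^sub>v (X *\<^sub>v w) = Y *\<^sub>v (minv X *\<^sub>v (X *\<^sub>v w))"
    using X w by (intro assoc_mult_mat_vec[OF Y Xinv(1)]) simp
  also have "minv X *\<^sub>v (X *\<^sub>v w) = (minv X * X) *\<^sub>v w"
    by (rule assoc_mult_mat_vec[symmetric, OF Xinv(1) X(1) w])
  also have "\<dots> = w"
    using Xinv(3) w by simp
  finally have "Y *\<^sub>v w = (Y * minv X) *\<^sub>v (X *\<^sub>v w)" by (rule sym)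
  then show ?thesis
    using vnorm_mult_mat_vec_le_spec_norm[of "Y * minv X" k m "X *\<^sub>v w"] X Xinv Y w by simp
qed

lemma spec_norm_le_if_dominated:
  assumes X: "X \<in> carrier_mat r m" and Y: "Y \<in> carrier_mat k m" and "0 < m" "0 \<le> c"
    and dom: "\<And>z. z \<in> carrier_vec m \<Longrightarrow> vnorm (Y *\<^sub>v z) \<le> c * vnorm (X *\<^sub>v z)"
  shows "spec_norm Y \<le> c * spec_norm X"
proof (rule spec_norm_le)
  fix z assume z: "z \<in> carrier_vec (dim_col Y)" "vnorm z = 1"
  then have "vnorm (Y *\<^sub>v z) \<le> c * vnorm (X *\<^sub>v z)"
    using Y dom by simp
  also have "\<dots> \<le> c * spec_norm X"
    using vnorm_mult_mat_vec_le_spec_norm[OF X, of z] z Y \<open>0 \<le> c\<close>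
    by (simp add: mult_left_mono)
  finally show "vnorm (Y *\<^sub>v z) \<le> c * spec_norm X" .
qed (use Y \<open>0 < m\<close> in simp)

lemma spec_norm_le_if_dominated_pythagorean:
  assumes X: "X \<in> carrier_mat r m" and Y: "Y \<in> carrier_mat k m" and W: "W \<in> carrier_mat n m"
    and "0 < m" "0 \<le> \<tau>"
    and dom: "\<And>z. z \<in> carrier_vec m \<Longrightarrow> vnorm (Y *\<^sub>v z) \<le> \<tau> * vnorm (X *\<^sub>v z)"
    and pyth: "\<And>z. z \<in> carrier_vec m \<Longrightarrow>
                 (vnorm (X *\<^sub>v z))\<^sup>2 + (vnorm (Y *\<^sub>v z))\<^sup>2 = (vnorm (W *\<^sub>v z))\<^sup>2"
  shows "sqrt (1 + \<tau>\<^sup>2) * spec_norm Y \<le> \<tau> * spec_norm W"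
proof -
  define s where "s = sqrt (1 + \<tau>\<^sup>2)"
  have "0 < s"
    unfolding s_def by (simp add: add_pos_nonneg)
  have "vnorm (Y *\<^sub>v z) \<le> \<tau> / s * vnorm (W *\<^sub>v z)" if z: "z \<in> carrier_vec m" for z
  proof -
    have "(s * vnorm (Y *\<^sub>v z))\<^sup>2 = (vnorm (Y *\<^sub>v z))\<^sup>2 + \<tau>\<^sup>2 * (vnorm (Y *\<^sub>v z))\<^sup>2"
      unfolding s_def power_mult_distrib by (simp add: distrib_right)
    also have "\<dots> \<le> (\<tau> * vnorm (X *\<^sub>v z))\<^sup>2 + \<tau>\<^sup>2 * (vnorm (Y *\<^sub>v z))\<^sup>2"
      using dom[OF z] by (simp add: power_mono)
    also have "\<dots> = (\<tau> * vnorm (W *\<^sub>v z))\<^sup>2"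
      unfolding power_mult_distrib pyth[OF z, symmetric] by (simp add: distrib_left)
    finally have "s * vnorm (Y *\<^sub>v z) \<le> \<tau> * vnorm (W *\<^sub>v z)"
      by (rule power2_le_imp_le) (use \<open>0 \<le> \<tau>\<close> in simp)
    then show ?thesis
      using \<open>0 < s\<close> by (simp add: le_divide_eq mult.commute)
  qed
  then have "spec_norm Y \<le> \<tau> / s * spec_norm W"
    using \<open>0 < m\<close> \<open>0 \<le> \<tau>\<close> \<open>0 < s\<close> by (intro spec_norm_le_if_dominated[OF W Y]) auto
  then show ?thesis
    unfolding s_def[symmetric] using \<open>0 < s\<close> by (simp add: le_divide_eq mult.commute)
qed

lemma invertible_and_spec_norm_mult_minv_less:
  assumes X: "X \<in> carrier_mat m m" and Y: "Y \<in> carrier_mat k m" and "0 < m" "0 < \<delta>"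
    and dom: "\<And>z. z \<in> carrier_vec m \<Longrightarrow>
                \<delta> * vnorm z \<le> \<tau> * vnorm (X *\<^sub>v z) - vnorm (Y *\<^sub>v z)"
  shows "invertible_mat X" "spec_norm (Y * minv X) < \<tau>"
proof -
  show Xinv: "invertible_mat X"
  proof (rule invertible_mat_if_injective[OF X])
    fix z assume z: "z \<in> carrier_vec m" "X *\<^sub>v z = 0\<^sub>v m"
    then have "\<delta> * vnorm z \<le> - vnorm (Y *\<^sub>v z)"
      using dom[OF z(1)] vnorm_eq_0_iff[of "X *\<^sub>v z" m] by simp
    then have "\<delta> * vnorm z \<le> 0"
      using vnorm_nonneg[of "Y *\<^sub>v z"] by linarith
    then show "z = 0\<^sub>v m"
      using \<open>0 < \<delta>\<close> vnorm_eq_0_iff[OF z(1)] by (simp add: mult_le_0_iff antisym)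
  qed
  note X' = minv_inverse[OF Xinv X]
  have X'_inverse: "X *\<^sub>v (minv X *\<^sub>v u) = u" if "u \<in> carrier_vec m" for u
  proof -
    have "X *\<^sub>v (minv X *\<^sub>v u) = (X * minv X) *\<^sub>v u"
      by (rule assoc_mult_mat_vec[symmetric, OF X X'(1) that])
    then show ?thesis
      using X'(2) that by simp
  qed
  have lower: "1 \<le> spec_norm X * vnorm (minv X *\<^sub>v u)"
    if "u \<in> carrier_vec m" "vnorm u = 1" for u
    using vnorm_mult_mat_vec_le_spec_norm[OF X, of "minv X *\<^sub>v u"] X'_inverse[OF that(1)] X' that
    by simp
  have "0 < spec_norm X"
    using lower[of "unit_vec m 0"] vnorm_unit_vec[OF \<open>0 < m\<close>] spec_norm_nonneg[of X] X \<open>0 < m\<close>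
    by (cases "spec_norm X = 0") auto
  have "spec_norm (Y * minv X) \<le> \<tau> - \<delta> / spec_norm X"
  proof (rule spec_norm_le)
    fix u assume u: "u \<in> carrier_vec (dim_col (Y * minv X))" "vnorm u = 1"
    then have uc: "u \<in> carrier_vec m"
      using X' by simp
    define z where "z = minv X *\<^sub>v u"
    have z: "z \<in> carrier_vec m" and Xz: "X *\<^sub>v z = u"
      using uc X' X'_inverse unfolding z_def by auto
    have "1 / spec_norm X \<le> vnorm z"
      using lower[OF uc u(2)] \<open>0 < spec_norm X\<close> unfolding z_def by (simp add: divide_le_eq mult.commute)
    then have "\<delta> * (1 / spec_norm X) \<le> \<delta> * vnorm z"
      using \<open>0 < \<delta>\<close> by (intro mult_left_mono) auto
    moreover have "(Y * minv X) *\<^sub>v u = Y *\<^sub>v z"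
      unfolding z_def by (rule assoc_mult_mat_vec[OF Y X'(1) uc])
    ultimately show "vnorm ((Y * minv X) *\<^sub>v u) \<le> \<tau> - \<delta> / spec_norm X"
      using dom[OF z] Xz u(2) by simp
  qed (use X' \<open>0 < m\<close> in simp)
  then show "spec_norm (Y * minv X) < \<tau>"
    using divide_pos_pos[OF \<open>0 < \<delta>\<close> \<open>0 < spec_norm X\<close>] by linarith
qed

section \<open>Coordinates in an orthonormal eigenbasis\<close>

lemma dim_Psi_le [simp]: "dim_row (Psi_le Psi m) = dim_row Psi" "dim_col (Psi_le Psi m) = m"
  unfolding Psi_le_def by simp_all

lemma dim_Psi_gt [simp]: "dim_row (Psi_gt Psi m) = dim_row Psi" "dim_col (Psi_gt Psi m) = dim_col Psi - m"
  unfolding Psi_gt_def by simp_all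

lemma index_adjoint_Psi_le_mult_vec:
  assumes Psi: "Psi \<in> carrier_mat N N" and v: "v \<in> carrier_vec N" and "i < m" "m \<le> N"
  shows "(mat_adjoint (Psi_le Psi m) *\<^sub>v v) $ i = (mat_adjoint Psi *\<^sub>v v) $ i"
proof -
  have "Psi_le Psi m \<in> carrier_mat N m"
    using Psi by auto
  then have "(mat_adjoint (Psi_le Psi m) *\<^sub>v v) $ i = (\<Sum>j<N. cnj (Psi_le Psi m $$ (j, i)) * v $ j)"
    using v \<open>i < m\<close> by (rule index_mat_adjoint_mult_vec)
  also have "\<dots> = (\<Sum>j<N. cnj (Psi $$ (j, i)) * v $ j)"
    using Psi \<open>i < m\<close> by (auto simp: Psi_le_def intro!: sum.cong)
  also have "\<dots> = (mat_adjoint Psi *\<^sub>v v) $ i"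
    using assms by (intro index_mat_adjoint_mult_vec[OF Psi v, symmetric]) simp
  finally show ?thesis .
qed

lemma index_adjoint_Psi_gt_mult_vec:
  assumes Psi: "Psi \<in> carrier_mat N N" and v: "v \<in> carrier_vec N" and "i < N - m"
  shows "(mat_adjoint (Psi_gt Psi m) *\<^sub>v v) $ i = (mat_adjoint Psi *\<^sub>v v) $ (i + m)"
proof -
  have "Psi_gt Psi m \<in> carrier_mat N (N - m)"
    using Psi by auto
  then have "(mat_adjoint (Psi_gt Psi m) *\<^sub>v v) $ i = (\<Sum>j<N. cnj (Psi_gt Psi m $$ (j, i)) * v $ j)"
    using v \<open>i < N - m\<close> by (rule index_mat_adjoint_mult_vec)
  also have "\<dots> = (\<Sum>j<N. cnj (Psi $$ (j, i + m)) * v $ j)"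
    using Psi \<open>i < N - m\<close> by (auto simp: Psi_gt_def intro!: sum.cong)
  also have "\<dots> = (mat_adjoint Psi *\<^sub>v v) $ (i + m)"
    using assms by (intro index_mat_adjoint_mult_vec[OF Psi v, symmetric]) simp
  finally show ?thesis .
qed

lemma index_mat_diag_mult_vec:
  assumes "w \<in> carrier_vec n" "i < n"
  shows "(mat_diag n f *\<^sub>v w) $ i = f i * w $ i"
  using assms by (simp add: mat_diag_def scalar_prod_def if_distrib[of "\<lambda>x. x * _"] sum.delta
      cong: if_cong)

lemma tan_theta_nonneg:
  assumes "0 < m" and X: "mat_adjoint (Psi_le Psi m) * V \<in> carrier_mat m m"
    and "invertible_mat (mat_adjoint (Psi_le Psi m) * V)"
  shows "0 \<le> tan_theta Psi m V"
  unfolding tan_theta_def using minv_inverse(1)[OF assms(3) X] \<open>0 < m\<close> by (intro spec_norm_nonneg) auto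

locale orthonormal_basis =
  fixes Psi :: "complex mat" and N :: nat
  assumes Psi_carrier: "Psi \<in> carrier_mat N N"
    and Psi_unitary: "mat_adjoint Psi * Psi = 1\<^sub>m N"
begin

lemma Psi_mult_adjoint: "Psi * mat_adjoint Psi = 1\<^sub>m N"
  by (rule mat_mult_left_right_inverse[OF mat_adjoint_carrier[OF Psi_carrier] Psi_carrier Psi_unitary])

lemma vnorm_adjoint_Psi_split:
  assumes "m \<le> N" and v: "v \<in> carrier_vec N"
  shows "(vnorm (mat_adjoint (Psi_le Psi m) *\<^sub>v v))\<^sup>2 + (vnorm (mat_adjoint (Psi_gt Psi m) *\<^sub>v v))\<^sup>2
         = (vnorm v)\<^sup>2"
proof -
  let ?c = "\<lambda>i. (cmod ((mat_adjoint Psi *\<^sub>v v) $ i))\<^sup>2"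
  have "(vnorm (mat_adjoint (Psi_le Psi m) *\<^sub>v v))\<^sup>2 = (\<Sum>i<m. ?c i)"
    unfolding vnorm_power2 using Psi_carrier
    by (auto simp: index_adjoint_Psi_le_mult_vec[OF Psi_carrier v _ \<open>m \<le> N\<close>]
        simp del: index_mult_mat_vec intro!: sum.cong)
  moreover have "(vnorm (mat_adjoint (Psi_gt Psi m) *\<^sub>v v))\<^sup>2 = (\<Sum>i<N - m. ?c (i + m))"
    unfolding vnorm_power2 using Psi_carrier
    by (auto simp: index_adjoint_Psi_gt_mult_vec[OF Psi_carrier v]
        simp del: index_mult_mat_vec intro!: sum.cong)
  moreover have "(\<Sum>i<N. ?c i) = (\<Sum>i<m. ?c i) + (\<Sum>i<N - m. ?c (i + m))"
    using \<open>m \<le> N\<close> sum.atLeastLessThan_concat[of 0 m N ?c] sum.shift_bounds_nat_ivl[of ?c 0 m "N - m"]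
    by (simp add: lessThan_atLeast0)
  moreover have "(\<Sum>i<N. ?c i) = (vnorm (mat_adjoint Psi *\<^sub>v v))\<^sup>2"
    unfolding vnorm_power2 using Psi_carrier by simp
  moreover have "vnorm (mat_adjoint Psi *\<^sub>v v) = vnorm v"
    using vnorm_isometry[OF mat_adjoint_carrier[OF Psi_carrier] _ v] Psi_mult_adjoint by simp
  ultimately show ?thesis
    by simp
qed

lemma tan_theta_spec_norm_bounds:
  assumes "0 < m" "m \<le> N" and V: "V \<in> carrier_mat N m"
    and V_inv: "invertible_mat (mat_adjoint (Psi_le Psi m) * V)" and Phi: "Phi \<in> carrier_mat m m"
  shows "spec_norm (mat_adjoint (Psi_gt Psi m) * V * Phi)
           \<le> tan_theta Psi m V * spec_norm (mat_adjoint (Psi_le Psi m) * V * Phi)"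
    and "sqrt (1 + (tan_theta Psi m V)\<^sup>2) * spec_norm (mat_adjoint (Psi_gt Psi m) * V * Phi)
           \<le> tan_theta Psi m V * spec_norm (V * Phi)"
proof -
  let ?Pl = "mat_adjoint (Psi_le Psi m)" and ?Pg = "mat_adjoint (Psi_gt Psi m)"
  have Pl: "?Pl \<in> carrier_mat m N" and Pg: "?Pg \<in> carrier_mat (N - m) N"
    using Psi_carrier by (auto intro!: mat_adjoint_carrier)
  then have PlV: "?Pl * V \<in> carrier_mat m m" and PgV: "?Pg * V \<in> carrier_mat (N - m) m"
    using V by auto
  have "0 \<le> tan_theta Psi m V"
    using tan_theta_nonneg[OF \<open>0 < m\<close> PlV V_inv] .
  have dom: "vnorm ((?Pg * V * Phi) *\<^sub>v z) \<le> tan_theta Psi m V * vnorm ((?Pl * V * Phi) *\<^sub>v z)"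
    if "z \<in> carrier_vec m" for z
    using vnorm_mult_le_spec_norm_mult_minv[OF PlV V_inv PgV, of "Phi *\<^sub>v z"] that PlV PgV Phi
    unfolding tan_theta_def by simp
  have pyth: "(vnorm ((?Pl * V * Phi) *\<^sub>v z))\<^sup>2 + (vnorm ((?Pg * V * Phi) *\<^sub>v z))\<^sup>2
              = (vnorm ((V * Phi) *\<^sub>v z))\<^sup>2" if z: "z \<in> carrier_vec m" for z
  proof -
    have w: "Phi *\<^sub>v z \<in> carrier_vec m"
      using Phi z by simp
    show ?thesis
      unfolding assoc_mult_mat_vec[OF PlV Phi z] assoc_mult_mat_vec[OF PgV Phi z]
        assoc_mult_mat_vec[OF V Phi z] assoc_mult_mat_vec[OF Pl V w] assoc_mult_mat_vec[OF Pg V w]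
      using V w by (intro vnorm_adjoint_Psi_split[OF \<open>m \<le> N\<close>]) simp
  qed
  show "spec_norm (?Pg * V * Phi) \<le> tan_theta Psi m V * spec_norm (?Pl * V * Phi)"
    using PlV PgV Phi \<open>0 < m\<close> \<open>0 \<le> tan_theta Psi m V\<close> dom
    by (intro spec_norm_le_if_dominated[of _ m m _ "N - m"]) auto
  show "sqrt (1 + (tan_theta Psi m V)\<^sup>2) * spec_norm (?Pg * V * Phi) \<le> tan_theta Psi m V * spec_norm (V * Phi)"
    using PlV PgV V Phi \<open>0 < m\<close> \<open>0 \<le> tan_theta Psi m V\<close> dom pyth
    by (intro spec_norm_le_if_dominated_pythagorean[of "?Pl * V * Phi" m m _ "N - m" _ N]) auto
qed

end

locale orthonormal_eigenbasis = orthonormal_basis +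
  fixes A :: "complex mat" and lam :: "nat \<Rightarrow> complex"
  assumes A_carrier: "A \<in> carrier_mat N N"
    and eigenpairs: "\<forall>j<N. A *\<^sub>v col Psi j = lam j \<cdot>\<^sub>v col Psi j"
begin

lemma A_mult_Psi: "A * Psi = Psi * mat_diag N lam"
proof (rule eq_matI)
  fix i j assume "i < dim_row (Psi * mat_diag N lam)" "j < dim_col (Psi * mat_diag N lam)"
  then have ij: "i < N" "j < N"
    using Psi_carrier carrier_matD[OF mat_diag_dim[of N lam]] by auto
  have "(A * Psi) $$ (i, j) = (A *\<^sub>v col Psi j) $ i"
    using A_carrier Psi_carrier ij by simp
  also have "\<dots> = Psi $$ (i, j) * lam j"
    using eigenpairs Psi_carrier ij by simp
  also have "\<dots> = (Psi * mat_diag N lam) $$ (i, j)"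
    using Psi_carrier ij by (simp add: mat_diag_mult_right)
  finally show "(A * Psi) $$ (i, j) = (Psi * mat_diag N lam) $$ (i, j)" .
qed (use A_carrier Psi_carrier carrier_matD[OF mat_diag_dim[of N lam]] in auto)

lemma adjoint_Psi_mult_A: "mat_adjoint Psi * A = mat_diag N lam * mat_adjoint Psi"
proof -
  note Psi' = mat_adjoint_carrier[OF Psi_carrier]
  have "mat_adjoint Psi * A = mat_adjoint Psi * A * (Psi * mat_adjoint Psi)"
    using Psi' A_carrier by (simp add: Psi_mult_adjoint)
  also have "\<dots> = mat_adjoint Psi * (A * Psi) * mat_adjoint Psi"
    using Psi' A_carrier Psi_carrier by (simp add: assoc_mult_mat[of _ N N _ N _ N])
  also have "\<dots> = (mat_adjoint Psi * Psi) * mat_diag N lam * mat_adjoint Psi"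
    using Psi' Psi_carrier by (simp add: A_mult_Psi assoc_mult_mat[of _ N N _ N _ N])
  also have "\<dots> = mat_diag N lam * mat_adjoint Psi"
    using Psi' by (simp add: Psi_unitary left_mult_one_mat[OF mat_diag_dim])
  finally show ?thesis .
qed

lemma index_adjoint_Psi_mult_A:
  assumes u: "u \<in> carrier_vec N" and "i < N"
  shows "(mat_adjoint Psi *\<^sub>v (A *\<^sub>v u)) $ i = lam i * (mat_adjoint Psi *\<^sub>v u) $ i"
proof -
  note Psi' = mat_adjoint_carrier[OF Psi_carrier]
  have "mat_adjoint Psi *\<^sub>v (A *\<^sub>v u) = mat_diag N lam *\<^sub>v (mat_adjoint Psi *\<^sub>v u)"
    using Psi' A_carrier u by (metis adjoint_Psi_mult_A assoc_mult_mat_vec mat_diag_dim)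
  then show ?thesis
    using Psi' u \<open>i < N\<close> by (simp add: index_mat_diag_mult_vec)
qed

lemma vnorm_adjoint_Psi_le_mult_A_ge:
  assumes "m \<le> N" and u: "u \<in> carrier_vec N"
    and "0 \<le> \<mu>" and \<mu>: "\<And>i. i < m \<Longrightarrow> \<mu> \<le> cmod (lam i)"
  shows "\<mu> * vnorm (mat_adjoint (Psi_le Psi m) *\<^sub>v u)
           \<le> vnorm (mat_adjoint (Psi_le Psi m) *\<^sub>v (A *\<^sub>v u))"
proof -
  have Au: "A *\<^sub>v u \<in> carrier_vec N"
    using A_carrier u by simp
  have "\<mu> * vnorm (mat_adjoint (Psi_le Psi m) *\<^sub>v u)
      = L2_set (\<lambda>i. \<mu> * cmod ((mat_adjoint (Psi_le Psi m) *\<^sub>v u) $ i)) {..<m}"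
    unfolding vnorm_eq_L2_set using \<open>0 \<le> \<mu>\<close> by (simp add: L2_set_right_distrib)
  also have "\<dots> \<le> L2_set (\<lambda>i. cmod ((mat_adjoint (Psi_le Psi m) *\<^sub>v (A *\<^sub>v u)) $ i)) {..<m}"
  proof (rule L2_set_mono)
    fix i assume "i \<in> {..<m}"
    then have "(mat_adjoint (Psi_le Psi m) *\<^sub>v (A *\<^sub>v u)) $ i
               = lam i * (mat_adjoint (Psi_le Psi m) *\<^sub>v u) $ i"
      using \<open>m \<le> N\<close> by (simp add: index_adjoint_Psi_le_mult_vec[OF Psi_carrier] u Au
          index_adjoint_Psi_mult_A[OF u] del: index_mult_mat_vec)
    then show "\<mu> * cmod ((mat_adjoint (Psi_le Psi m) *\<^sub>v u) $ i)
               \<le> cmod ((mat_adjoint (Psi_le Psi m) *\<^sub>v (A *\<^sub>v u)) $ i)"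
      using \<mu> \<open>i \<in> {..<m}\<close> by (simp add: norm_mult mult_right_mono)
  qed (use \<open>0 \<le> \<mu>\<close> in simp)
  also have "\<dots> = vnorm (mat_adjoint (Psi_le Psi m) *\<^sub>v (A *\<^sub>v u))"
    unfolding vnorm_eq_L2_set by simp
  finally show ?thesis .
qed

lemma vnorm_adjoint_Psi_gt_mult_A_le:
  assumes u: "u \<in> carrier_vec N"
    and "0 \<le> \<nu>" and \<nu>: "\<And>i. m \<le> i \<Longrightarrow> i < N \<Longrightarrow> cmod (lam i) \<le> \<nu>"
  shows "vnorm (mat_adjoint (Psi_gt Psi m) *\<^sub>v (A *\<^sub>v u))
           \<le> \<nu> * vnorm (mat_adjoint (Psi_gt Psi m) *\<^sub>v u)"
proof -
  have Au: "A *\<^sub>v u \<in> carrier_vec N"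
    using A_carrier u by simp
  have "vnorm (mat_adjoint (Psi_gt Psi m) *\<^sub>v (A *\<^sub>v u))
      = L2_set (\<lambda>i. cmod ((mat_adjoint (Psi_gt Psi m) *\<^sub>v (A *\<^sub>v u)) $ i)) {..<N - m}"
    unfolding vnorm_eq_L2_set using Psi_carrier by simp
  also have "\<dots> \<le> L2_set (\<lambda>i. \<nu> * cmod ((mat_adjoint (Psi_gt Psi m) *\<^sub>v u) $ i)) {..<N - m}"
  proof (rule L2_set_mono)
    fix i assume "i \<in> {..<N - m}"
    then have "(mat_adjoint (Psi_gt Psi m) *\<^sub>v (A *\<^sub>v u)) $ i
               = lam (i + m) * (mat_adjoint (Psi_gt Psi m) *\<^sub>v u) $ i"
      by (simp add: index_adjoint_Psi_gt_mult_vec[OF Psi_carrier] u Au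
          index_adjoint_Psi_mult_A[OF u] del: index_mult_mat_vec)
    then show "cmod ((mat_adjoint (Psi_gt Psi m) *\<^sub>v (A *\<^sub>v u)) $ i)
               \<le> \<nu> * cmod ((mat_adjoint (Psi_gt Psi m) *\<^sub>v u) $ i)"
      using \<nu>[of "i + m"] \<open>i \<in> {..<N - m}\<close> by (simp add: norm_mult mult_right_mono)
  qed simp
  also have "\<dots> = \<nu> * vnorm (mat_adjoint (Psi_gt Psi m) *\<^sub>v u)"
    unfolding vnorm_eq_L2_set using Psi_carrier \<open>0 \<le> \<nu>\<close> by (simp add: L2_set_right_distrib)
  finally show ?thesis .
qed


lemma perturbed_step_bound:
  assumes "m \<le> N" and u: "u \<in> carrier_vec N" and e: "e \<in> carrier_vec N" and "0 \<le> \<tau>"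
    and "0 \<le> \<mu>" "\<And>i. i < m \<Longrightarrow> \<mu> \<le> cmod (lam i)"
    and "0 \<le> \<nu>" "\<And>i. m \<le> i \<Longrightarrow> i < N \<Longrightarrow> cmod (lam i) \<le> \<nu>"
  shows "\<tau> * \<mu> * vnorm (mat_adjoint (Psi_le Psi m) *\<^sub>v u)
           - \<nu> * vnorm (mat_adjoint (Psi_gt Psi m) *\<^sub>v u) - sqrt (1 + \<tau>\<^sup>2) * vnorm e
         \<le> \<tau> * vnorm (mat_adjoint (Psi_le Psi m) *\<^sub>v (A *\<^sub>v u + e))
           - vnorm (mat_adjoint (Psi_gt Psi m) *\<^sub>v (A *\<^sub>v u + e))"
proof -
  define Pl Pg where "Pl = mat_adjoint (Psi_le Psi m)" and "Pg = mat_adjoint (Psi_gt Psi m)"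
  have Pl: "Pl \<in> carrier_mat m N" and Pg: "Pg \<in> carrier_mat (N - m) N"
    using Psi_carrier unfolding Pl_def Pg_def by (auto intro!: mat_adjoint_carrier)
  have Au: "A *\<^sub>v u \<in> carrier_vec N"
    using A_carrier u by simp
  have "\<mu> * vnorm (Pl *\<^sub>v u) - vnorm (Pl *\<^sub>v e)
        \<le> vnorm (Pl *\<^sub>v (A *\<^sub>v u)) - vnorm (Pl *\<^sub>v e)"
    using vnorm_adjoint_Psi_le_mult_A_ge[OF \<open>m \<le> N\<close> u \<open>0 \<le> \<mu>\<close>] assms(6)
    unfolding Pl_def by simp
  also have "\<dots> \<le> vnorm (Pl *\<^sub>v (A *\<^sub>v u) + Pl *\<^sub>v e)"
    using Pl Au e by (intro vnorm_add_ge[of _ m]) auto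
  also have "\<dots> = vnorm (Pl *\<^sub>v (A *\<^sub>v u + e))"
    using Pl Au e by (simp add: mult_add_distrib_mat_vec)
  finally have "\<tau> * (\<mu> * vnorm (Pl *\<^sub>v u) - vnorm (Pl *\<^sub>v e))
                \<le> \<tau> * vnorm (Pl *\<^sub>v (A *\<^sub>v u + e))"
    using \<open>0 \<le> \<tau>\<close> by (rule mult_left_mono)
  moreover have "vnorm (Pg *\<^sub>v (A *\<^sub>v u + e)) \<le> \<nu> * vnorm (Pg *\<^sub>v u) + vnorm (Pg *\<^sub>v e)"
  proof -
    have "vnorm (Pg *\<^sub>v (A *\<^sub>v u + e)) = vnorm (Pg *\<^sub>v (A *\<^sub>v u) + Pg *\<^sub>v e)"
      using Pg Au e by (simp add: mult_add_distrib_mat_vec)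
    also have "\<dots> \<le> vnorm (Pg *\<^sub>v (A *\<^sub>v u)) + vnorm (Pg *\<^sub>v e)"
      using Pg Au e by (intro vnorm_add_le[of _ "N - m"]) auto
    also have "\<dots> \<le> \<nu> * vnorm (Pg *\<^sub>v u) + vnorm (Pg *\<^sub>v e)"
      using vnorm_adjoint_Psi_gt_mult_A_le[OF u \<open>0 \<le> \<nu>\<close>] assms(8) unfolding Pg_def by simp
    finally show ?thesis .
  qed
  moreover have "\<tau> * vnorm (Pl *\<^sub>v e) + vnorm (Pg *\<^sub>v e) \<le> sqrt (1 + \<tau>\<^sup>2) * vnorm e"
    using cauchy_schwarz_two[of \<tau> "vnorm (Pl *\<^sub>v e)" "vnorm (Pg *\<^sub>v e)"]
      vnorm_adjoint_Psi_split[OF \<open>m \<le> N\<close> e] unfolding Pl_def Pg_def by simp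
  ultimately show ?thesis
    unfolding Pl_def Pg_def by (simp add: algebra_simps)
qed

lemma perturbed_step_matrix_bound:
  assumes "m \<le> N" and W: "W \<in> carrier_mat N m" and E: "E \<in> carrier_mat N m"
    and z: "z \<in> carrier_vec m" and "0 \<le> \<tau>"
    and "0 \<le> \<mu>" "\<And>i. i < m \<Longrightarrow> \<mu> \<le> cmod (lam i)"
    and "0 \<le> \<nu>" "\<And>i. m \<le> i \<Longrightarrow> i < N \<Longrightarrow> cmod (lam i) \<le> \<nu>"
  shows "(\<tau> * \<mu> * smin (mat_adjoint (Psi_le Psi m) * W)
            - \<nu> * spec_norm (mat_adjoint (Psi_gt Psi m) * W) - sqrt (1 + \<tau>\<^sup>2) * spec_norm E) * vnorm z
         \<le> \<tau> * vnorm ((mat_adjoint (Psi_le Psi m) * (A * W + E)) *\<^sub>v z)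
           - vnorm ((mat_adjoint (Psi_gt Psi m) * (A * W + E)) *\<^sub>v z)"
proof -
  define Pl Pg where "Pl = mat_adjoint (Psi_le Psi m)" and "Pg = mat_adjoint (Psi_gt Psi m)"
  have Pl: "Pl \<in> carrier_mat m N" and Pg: "Pg \<in> carrier_mat (N - m) N"
    using Psi_carrier unfolding Pl_def Pg_def by (auto intro!: mat_adjoint_carrier)
  define u e where "u = W *\<^sub>v z" and "e = E *\<^sub>v z"
  have u: "u \<in> carrier_vec N" and e: "e \<in> carrier_vec N"
    using W E z unfolding u_def e_def by auto
  have "(A * W + E) *\<^sub>v z = (A * W) *\<^sub>v z + E *\<^sub>v z"
    using A_carrier W by (intro add_mult_distrib_mat_vec[OF _ E z]) auto
  also have "(A * W) *\<^sub>v z = A *\<^sub>v u"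
    unfolding u_def using A_carrier W z by simp
  finally have AWE: "(A * W + E) *\<^sub>v z = A *\<^sub>v u + e"
    unfolding e_def .
  have "A * W + E \<in> carrier_mat N m"
    using A_carrier W E by auto
  then have step: "(Pl * (A * W + E)) *\<^sub>v z = Pl *\<^sub>v (A *\<^sub>v u + e)"
      "(Pg * (A * W + E)) *\<^sub>v z = Pg *\<^sub>v (A *\<^sub>v u + e)"
    using Pl Pg z by (simp_all add: AWE[symmetric])
  have "smin (Pl * W) * vnorm z \<le> vnorm (Pl *\<^sub>v u)"
    using smin_le_vnorm_mult_mat_vec[of "Pl * W" m m z] Pl W z unfolding u_def by auto
  then have "\<tau> * \<mu> * (smin (Pl * W) * vnorm z) \<le> \<tau> * \<mu> * vnorm (Pl *\<^sub>v u)"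
    using \<open>0 \<le> \<tau>\<close> \<open>0 \<le> \<mu>\<close> by (intro mult_left_mono) auto
  moreover have "vnorm (Pg *\<^sub>v u) \<le> spec_norm (Pg * W) * vnorm z"
    using vnorm_mult_mat_vec_le_spec_norm[of "Pg * W" "N - m" m z] Pg W z unfolding u_def by auto
  then have "\<nu> * vnorm (Pg *\<^sub>v u) \<le> \<nu> * (spec_norm (Pg * W) * vnorm z)"
    using \<open>0 \<le> \<nu>\<close> by (rule mult_left_mono)
  moreover have "sqrt (1 + \<tau>\<^sup>2) * vnorm e \<le> sqrt (1 + \<tau>\<^sup>2) * (spec_norm E * vnorm z)"
    using vnorm_mult_mat_vec_le_spec_norm[OF E z] unfolding e_def by (simp add: mult_left_mono)
  moreover note perturbed_step_bound[OF \<open>m \<le> N\<close> u e assms(5-9)]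
  ultimately show ?thesis
    unfolding step Pl_def[symmetric] Pg_def[symmetric] by (simp add: algebra_simps)
qed

lemma tan_theta_perturbed_step_less:
  assumes "0 < m" "m \<le> N" and W: "W \<in> carrier_mat N m" and E: "E \<in> carrier_mat N m"
    and "0 \<le> \<tau>" "0 \<le> \<mu>" "\<And>i. i < m \<Longrightarrow> \<mu> \<le> cmod (lam i)"
    and "0 \<le> \<nu>" "\<And>i. m \<le> i \<Longrightarrow> i < N \<Longrightarrow> cmod (lam i) \<le> \<nu>"
    and margin: "sqrt (1 + \<tau>\<^sup>2) * spec_norm E
                   < \<tau> * \<mu> * smin (mat_adjoint (Psi_le Psi m) * W) - \<nu> * spec_norm (mat_adjoint (Psi_gt Psi m) * W)"
  shows "invertible_mat (mat_adjoint (Psi_le Psi m) * (A * W + E))"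
    and "tan_theta Psi m (A * W + E) < \<tau>"
proof -
  have "mat_adjoint (Psi_le Psi m) * (A * W + E) \<in> carrier_mat m m"
       "mat_adjoint (Psi_gt Psi m) * (A * W + E) \<in> carrier_mat (N - m) m"
    using Psi_carrier A_carrier W E by (auto intro!: mat_adjoint_carrier)
  from invertible_and_spec_norm_mult_minv_less[OF this \<open>0 < m\<close> _
        perturbed_step_matrix_bound[OF \<open>m \<le> N\<close> W E _ assms(5-9)]] margin
  show "invertible_mat (mat_adjoint (Psi_le Psi m) * (A * W + E))"
    and "tan_theta Psi m (A * W + E) < \<tau>"
    unfolding tan_theta_def by auto
qed

end

text \<open>
  With x, sx, y, w standing for ||X||, sigma_min(X), ||Y||, ||V Phi|| (so that 1 / (x / sx) is
  1 / kappa_2(X)), the first assumption is the hypothesis of the theorem.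
\<close>

lemma perturbation_margin:
  fixes e x y w sx \<mu> \<nu> \<tau> s :: real
  assumes bound: "e / \<mu> < (1 / (x / sx) - \<nu> / \<mu>) * x * y / w"
    and "y \<le> \<tau> * x" "s * y \<le> \<tau> * w"
    and "0 < \<mu>" "0 \<le> \<nu>" "0 \<le> e" "0 \<le> x" "0 \<le> y" "0 \<le> w" "1 \<le> s"
  shows "s * e < \<tau> * \<mu> * sx - \<nu> * y"
proof -
  define R where "R = (1 / (x / sx) - \<nu> / \<mu>) * x * y / w"
  have "0 < R"
    using bound divide_nonneg_pos[OF \<open>0 \<le> e\<close> \<open>0 < \<mu>\<close>] unfolding R_def by linarith
  then have "0 < x" "0 < y" "0 < w"
    using \<open>0 \<le> x\<close> \<open>0 \<le> y\<close> \<open>0 \<le> w\<close> unfolding R_def by (auto simp: less_le)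
  define P where "P = \<mu> * sx - \<nu> * x"
  have R_eq: "R = P * y / (\<mu> * w)"
    unfolding R_def P_def using \<open>0 < x\<close> \<open>0 < w\<close> \<open>0 < \<mu>\<close> by (simp add: field_simps)
  have "0 < P * y"
    using \<open>0 < R\<close> mult_pos_pos[OF \<open>0 < \<mu>\<close> \<open>0 < w\<close>] unfolding R_eq
    by (simp add: zero_less_divide_iff)
  then have "0 < P"
    using \<open>0 < y\<close> by (simp add: zero_less_mult_iff)
  have "e < P * y / w"
    using bound \<open>0 < \<mu>\<close> unfolding R_def[symmetric] R_eq by (simp add: field_simps)
  then have "s * e < s * (P * y / w)"
    using \<open>1 \<le> s\<close> by (intro mult_strict_left_mono) auto
  also have "\<dots> = P * (s * y) / w"
    by simp
  also have "\<dots> \<le> P * (\<tau> * w) / w"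
    using \<open>s * y \<le> \<tau> * w\<close> \<open>0 < P\<close> \<open>0 < w\<close> by (intro divide_right_mono mult_left_mono) auto
  also have "\<dots> = \<tau> * \<mu> * sx - \<tau> * \<nu> * x"
    unfolding P_def using \<open>0 < w\<close> by (simp add: field_simps)
  also have "\<dots> \<le> \<tau> * \<mu> * sx - \<nu> * y"
    using mult_left_mono[OF \<open>y \<le> \<tau> * x\<close> \<open>0 \<le> \<nu>\<close>] by (simp add: algebra_simps)
  finally show ?thesis .
qed

theorem theorem4:
  fixes A Psi V Phi E V' :: "complex mat" and lam :: "nat \<Rightarrow> complex" and N m :: nat
  assumes A: "A \<in> carrier_mat N N"
    and Psi: "Psi \<in> carrier_mat N N"
    and orthonormal: "mat_adjoint Psi * Psi = 1\<^sub>m N"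
    and eig: "\<forall>j<N. A *\<^sub>v col Psi j = lam j \<cdot>\<^sub>v col Psi j"
    and ordered: "\<forall>i j. i \<le> j \<and> j < N \<longrightarrow> cmod (lam j) \<le> cmod (lam i)"
    and m: "1 \<le> m" "m < N"
    and lam_m: "lam (m - 1) \<noteq> 0"
    and V: "V \<in> carrier_mat N m"
    and V_inv: "invertible_mat (mat_adjoint (Psi_le Psi m) * V)"
    and Phi: "Phi \<in> carrier_mat m m" "invertible_mat Phi"
    and E: "E \<in> carrier_mat N m"
    and V': "V' = A * V * Phi + E"
    and bound: "spec_norm E / cmod (lam (m - 1)) <
      (1 / cond2 (mat_adjoint (Psi_le Psi m) * V * Phi) - cmod (lam m / lam (m - 1)))
      * spec_norm (mat_adjoint (Psi_le Psi m) * V * Phi)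
      * spec_norm (mat_adjoint (Psi_gt Psi m) * V * Phi)
      / spec_norm (V * Phi)"
  shows "theta Psi m V' < theta Psi m V"
proof -
  \<comment> \<open>Phi need not be invertible: the bound |Y z| \<le> \<tau> |X z| is inherited from V at Phi z.\<close>
  interpret orthonormal_eigenbasis Psi N A lam
    using A Psi orthonormal eig by unfold_locales
  let ?Pl = "mat_adjoint (Psi_le Psi m)" and ?Pg = "mat_adjoint (Psi_gt Psi m)"
  let ?\<mu> = "cmod (lam (m - 1))" and ?\<nu> = "cmod (lam m)"
  define \<tau> where "\<tau> = tan_theta Psi m V"
  have "0 < m" "m \<le> N"
    using m by auto
  have Pl: "?Pl \<in> carrier_mat m N" and Pg: "?Pg \<in> carrier_mat (N - m) N"
    using Psi by (auto intro!: mat_adjoint_carrier)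
  have VPhi: "V * Phi \<in> carrier_mat N m"
    using V Phi by auto
  have assoc: "?Pl * V * Phi = ?Pl * (V * Phi)" "?Pg * V * Phi = ?Pg * (V * Phi)"
    "V' = A * (V * Phi) + E"
    unfolding V' using A Pl Pg V Phi by (auto intro: assoc_mult_mat)
  have "0 \<le> \<tau>"
    unfolding \<tau>_def using Pl V by (intro tan_theta_nonneg[OF \<open>0 < m\<close> _ V_inv]) auto
  have \<mu>_le: "?\<mu> \<le> cmod (lam i)" if "i < m" for i
  proof -
    have "i \<le> m - 1" "m - 1 < N"
      using that m by auto
    then show ?thesis
      using ordered by blast
  qed
  have "sqrt (1 + \<tau>\<^sup>2) * spec_norm E
        < \<tau> * ?\<mu> * smin (?Pl * V * Phi) - ?\<nu> * spec_norm (?Pg * V * Phi)"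
    using bound[unfolded cond2_def norm_divide]
      tan_theta_spec_norm_bounds[OF \<open>0 < m\<close> \<open>m \<le> N\<close> V V_inv Phi(1)]
    unfolding \<tau>_def[symmetric]
    by (rule perturbation_margin) (use lam_m Pl Pg VPhi E m in \<open>auto intro!: spec_norm_nonneg\<close>)
  from tan_theta_perturbed_step_less
    [OF \<open>0 < m\<close> \<open>m \<le> N\<close> VPhi E \<open>0 \<le> \<tau>\<close> _ \<mu>_le _ _ this[unfolded assoc]]
  show ?thesis
    using V_inv ordered unfolding theta_def \<tau>_def assoc by (simp add: arctan_less_iff)
qed

end
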